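(* Let $v_{1,1},v_{2,1},w_{1,1},w_{2,1}\in\mathbb R$ satisfy $w_{i,1}>0$, $4v_{i,1}+w_{i,1}>0$ ($i=1,2$), $v_{1,1}v_{2,1}>0$ and $c_2>c_1$, where $c_i:=2v_{i,1}+w_{i,1}$. Then $\omega_-(\vartheta)+\omega_+(2\vartheta)\neq\omega_+(3\vartheta)$ for all $\vartheta\in(-\pi,\pi]$.
   Context: For $\vartheta\in\mathbb R$ define $$\omega_\pm(\vartheta):=\sqrt{\tfrac12\Big(c_1+c_2\pm\sqrt{(c_1-c_2)^2+8v_{1,1}v_{2,1}(\cos\vartheta+1)}\Big)},$$ which are well defined and positive under the stated assumptions. *)

theory Defs
  imports Complex_Main
begin

definition omega_pm :: "bool \<Rightarrow> real \<Rightarrow> real \<Rightarrow> real \<Rightarrow> real \<Rightarrow> real \<Rightarrow> real" where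
  "omega_pm s c1 c2 v11 v21 \<theta> =
     sqrt ((1/2) * (c1 + c2 + (if s then 1 else -1) *
        sqrt ((c1 - c2)^2 + 8 * v11 * v21 * (cos \<theta> + 1))))"

abbreviation omega_plus where "omega_plus \<equiv> omega_pm True"
abbreviation omega_minus where "omega_minus \<equiv> omega_pm False"

end

theory Submission
  imports Defs
begin

(*
  We prove the stronger strict inequality
      omega_minus(t) + omega_plus(2t) > omega_plus(3t)   for every real t.
  Write a = c1 + c2, d = (c1 - c2)^2, k = 8 v11 v21 and D(t) = sqrt (d + k (1 + cos t)),
  so that omega_pm(t) = sqrt (1/2) * sqrt (a +- D(t)).  The hypotheses give a > 0, k >= 0
  and the key positivity a^2 - d - 2k > 0, which keeps a - D(t) bounded away from zero:
  2a (a - D(x)) > k (1 - cos x).  On the other hand, sqrt (a + D(z)) can exceed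
  sqrt (a + D(2x)) only by a little: the increment of a square root is controlled by
  4a (sqrt (a+p) - sqrt (a+q))^2 <= (p-q)^2, and the increment of D by that of
  sqrt (k (1 + cos t)), which is at most sqrt (2k) (1 - |cos x|) because 1 + cos 2x = 2 cos^2 x.
  Comparing the two bounds yields the core inequality for arbitrary x and z, from which
  the theorem follows by scaling with sqrt (1/2).
*)

lemma sqrt_shift_increment_le:
  fixes d p q :: real
  assumes "0 \<le> d" "0 \<le> q" "q \<le> p"
  shows "sqrt (d + p) - sqrt (d + q) \<le> sqrt p - sqrt q"
proof -
  define S T where "S = sqrt (d + p) + sqrt (d + q)" and "T = sqrt p + sqrt q"
  have T_le_S: "T \<le> S" unfolding S_def T_def using assms
    by (intro add_mono) auto
  have S_prod: "(sqrt (d + p) - sqrt (d + q)) * S = p - q"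
    unfolding S_def using assms by (simp add: algebra_simps)
  have T_prod: "(sqrt p - sqrt q) * T = p - q"
    unfolding T_def using assms by (simp add: algebra_simps)
  show ?thesis
  proof (cases "p = 0")
    case True
    then show ?thesis using assms by simp
  next
    case False
    then have T_pos: "0 < T" unfolding T_def using assms by (simp add: add_pos_nonneg)
    have "(sqrt (d + p) - sqrt (d + q)) * T \<le> (sqrt (d + p) - sqrt (d + q)) * S"
      using T_le_S assms by (intro mult_left_mono) auto
    also have "\<dots> = (sqrt p - sqrt q) * T" using S_prod T_prod by simp
    finally show ?thesis using T_pos by simp
  qed
qed

lemma sqrt_increment_sq_bound:
  fixes a p q :: real
  assumes "0 < a" "0 \<le> q" "q \<le> p"
  shows "4 * a * (sqrt (a + p) - sqrt (a + q))^2 \<le> (p - q)^2"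
proof -
  define B C where "B = sqrt (a + q)" and "C = sqrt (a + p)"
  have "sqrt a \<le> B" "sqrt a \<le> C" unfolding B_def C_def using assms by simp_all
  then have sum_ge: "2 * sqrt a \<le> C + B" by simp
  have prod: "(C - B) * (C + B) = p - q"
    unfolding B_def C_def using assms by (simp add: algebra_simps)
  have "4 * a = (2 * sqrt a)^2" using assms by (simp add: power_mult_distrib)
  also have "\<dots> \<le> (C + B)^2" using sum_ge assms by (intro power_mono) auto
  finally have "4 * a * (C - B)^2 \<le> (C + B)^2 * (C - B)^2" by (simp add: mult_right_mono)
  also have "\<dots> = (p - q)^2" by (simp flip: prod add: power_mult_distrib)
  finally show ?thesis unfolding B_def C_def .
qed

lemma cos_term_bounds:
  fixes k t :: real
  assumes "0 \<le> k"
  shows "0 \<le> k * (1 + cos t)" and "k * (1 + cos t) \<le> 2 * k"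
proof -
  have "0 \<le> 1 + cos t" "1 + cos t \<le> 2"
    using cos_ge_minus_one[of t] cos_le_one[of t] by linarith+
  then show "0 \<le> k * (1 + cos t)" "k * (1 + cos t) \<le> 2 * k"
    using assms mult_left_mono[of "1 + cos t" 2 k] by simp_all
qed

lemma discriminant_root_gap:
  fixes a d k x :: real
  assumes "0 < a" "0 \<le> d" "0 \<le> k" "2 * k < a^2 - d"
  shows "sqrt (d + k * (1 + cos x)) < a"
    and "k * (1 - cos x) < 2 * a * (a - sqrt (d + k * (1 + cos x)))"
proof -
  define D where "D = sqrt (d + k * (1 + cos x))"
  note bounds = cos_term_bounds[OF assms(3), of x]
  then have D_sq: "D^2 = d + k * (1 + cos x)" and D_nonneg: "0 \<le> D"
    unfolding D_def using assms by simp_all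
  then have "D^2 < a^2" using bounds assms(4) by simp
  then show D_less: "sqrt (d + k * (1 + cos x)) < a"
    unfolding D_def[symmetric] using assms(1) by (simp add: power_less_imp_less_base)
  have "k * (1 - cos x) < (a - D) * (a + D)"
    using D_sq assms(4) by (simp add: algebra_simps power2_eq_square)
  also have "\<dots> \<le> (a - D) * (2 * a)"
    using D_less D_nonneg unfolding D_def by (intro mult_left_mono) auto
  finally show "k * (1 - cos x) < 2 * a * (a - sqrt (d + k * (1 + cos x)))"
    unfolding D_def by (simp add: algebra_simps)
qed

text \<open>Since 1 + cos 2x = 2 cos^2 x, the root sqrt (k (1 + cos t)) at t = 2x lies within
  sqrt (2k) (1 - |cos x|) of its maximal value sqrt (2k).\<close>
lemma cos_root_increment_le:
  fixes k x z :: real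
  assumes "0 \<le> k"
  shows "sqrt (k * (1 + cos z)) - sqrt (k * (1 + cos (2 * x))) \<le> sqrt (2 * k) * (1 - \<bar>cos x\<bar>)"
proof -
  have "sqrt (k * (1 + cos z)) \<le> sqrt (2 * k)"
    using cos_term_bounds[OF assms] by simp
  moreover have "1 + cos (2 * x) = 2 * (cos x)^2"
    by (simp add: cos_double_cos)
  then have "k * (1 + cos (2 * x)) = (sqrt (2 * k) * \<bar>cos x\<bar>)^2"
    using assms by (simp add: power_mult_distrib)
  then have "sqrt (k * (1 + cos (2 * x))) = sqrt (2 * k) * \<bar>cos x\<bar>"
    using assms by simp
  ultimately show ?thesis by (simp add: algebra_simps)
qed

lemma core_inequality:
  fixes a d k x z :: real
  assumes a_pos: "0 < a" and d_nonneg: "0 \<le> d" and k_nonneg: "0 \<le> k"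
    and gap: "2 * k < a^2 - d"
  shows "sqrt (a + sqrt (d + k * (1 + cos z)))
           < sqrt (a - sqrt (d + k * (1 + cos x))) + sqrt (a + sqrt (d + k * (1 + cos (2 * x))))"
proof -
  define D where "D t = sqrt (d + k * (1 + cos t))" for t
  define A B C where "A = sqrt (a - D x)" and "B = sqrt (a + D (2 * x))" and "C = sqrt (a + D z)"
  note nonneg = cos_term_bounds(1)[OF k_nonneg]
  have D_less: "D x < a" and margin: "k * (1 - cos x) < 2 * a * A^2"
    using discriminant_root_gap[OF a_pos d_nonneg k_nonneg gap, of x] a_pos
    unfolding A_def D_def by simp_all
  have A_pos: "0 < A" unfolding A_def using D_less by simp
  have "C < A + B"
  proof (cases "D z \<le> D (2 * x)")
    case True
    then have "C \<le> B" unfolding B_def C_def by simp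
    then show ?thesis using A_pos by simp
  next
    case False
    define e where "e = sqrt (2 * k) * (1 - \<bar>cos x\<bar>)"
    have e_nonneg: "0 \<le> e" and e_le: "e \<le> sqrt (2 * k)"
      unfolding e_def using k_nonneg abs_cos_le_one[of x] by (simp_all add: mult_left_le)
    have "k * (1 + cos (2 * x)) \<le> k * (1 + cos z)"
      using False unfolding D_def by simp
    then have "D z - D (2 * x) \<le> sqrt (k * (1 + cos z)) - sqrt (k * (1 + cos (2 * x)))"
      unfolding D_def using d_nonneg nonneg by (intro sqrt_shift_increment_le) auto
    also have "\<dots> \<le> e" unfolding e_def using cos_root_increment_le[OF k_nonneg] .
    finally have D_incr: "D z - D (2 * x) \<le> e" .
    have "4 * a * (C - B)^2 \<le> (D z - D (2 * x))^2"
      unfolding B_def C_def using a_pos False d_nonneg nonneg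
      by (intro sqrt_increment_sq_bound) (simp_all add: D_def)
    also have "\<dots> \<le> e^2" using D_incr False by (intro power_mono) auto
    also have "\<dots> \<le> sqrt (2 * k) * e"
      using e_le e_nonneg by (simp add: power2_eq_square mult_right_mono)
    also have "\<dots> = 2 * k * (1 - \<bar>cos x\<bar>)" unfolding e_def using k_nonneg by simp
    also have "\<dots> \<le> 2 * k * (1 - cos x)" using k_nonneg by (simp add: mult_left_mono)
    also have "\<dots> < 4 * a * A^2" using margin by simp
    finally have "(C - B)^2 < A^2" using a_pos by simp
    then have "C - B < A" using A_pos by (simp add: power_less_imp_less_base)
    then show ?thesis by simp
  qed
  then show ?thesis unfolding A_def B_def C_def D_def .
qed

lemma omega_pm_eq:
  "omega_pm s c1 c2 v11 v21 t
     = sqrt (1/2) * sqrt (c1 + c2 + (if s then 1 else -1)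
                            * sqrt ((c1 - c2)^2 + 8 * v11 * v21 * (1 + cos t)))"
  unfolding omega_pm_def by (simp only: add.commute[of "cos t"] real_sqrt_mult)

text \<open>Under the hypotheses of the theorem, 2k < a^2 - d: indeed
  a^2 - d - 2k = 4 c1 c2 - 16 v11 v21 = 2 (w11 (4 v21 + w21) + w21 (4 v11 + w11)).\<close>
lemma discriminant_margin:
  fixes v11 v21 w11 w21 c1 c2 :: real
  assumes "w11 > 0" "w21 > 0" "4 * v11 + w11 > 0" "4 * v21 + w21 > 0"
    and "c1 = 2 * v11 + w11" "c2 = 2 * v21 + w21"
  shows "2 * (8 * v11 * v21) < (c1 + c2)^2 - (c1 - c2)^2"
proof -
  have margin: "(c1 + c2)^2 - (c1 - c2)^2 - 2 * (8 * v11 * v21)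
          = 2 * (w11 * (4 * v21 + w21) + w21 * (4 * v11 + w11))"
    using assms(5,6) by (simp add: algebra_simps power2_eq_square)
  have "0 < w11 * (4 * v21 + w21) + w21 * (4 * v11 + w11)"
    using assms(1-4) by (simp add: add_pos_pos)
  then have "0 < (c1 + c2)^2 - (c1 - c2)^2 - 2 * (8 * v11 * v21)"
    unfolding margin by simp
  then show ?thesis by simp
qed

theorem mainTheorem4:
  fixes v11 v21 w11 w21 c1 c2 \<theta> :: real
  assumes "w11 > 0" and "w21 > 0"
    and "4 * v11 + w11 > 0" and "4 * v21 + w21 > 0"
    and "v11 * v21 > 0"
    and "c1 = 2 * v11 + w11" and "c2 = 2 * v21 + w21"
    and "c2 > c1"
    and "\<theta> \<in> {-pi<..pi}"
  shows "omega_minus c1 c2 v11 v21 \<theta> + omega_plus c1 c2 v11 v21 (2 * \<theta>)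
           \<noteq> omega_plus c1 c2 v11 v21 (3 * \<theta>)"
proof -
  have a_pos: "0 < c1 + c2" using assms(1-4,6,7) by linarith
  have k_nonneg: "0 \<le> 8 * v11 * v21" using assms(5) by simp
  have "sqrt (c1 + c2 + sqrt ((c1 - c2)^2 + 8 * v11 * v21 * (1 + cos (3 * \<theta>))))
          < sqrt (c1 + c2 - sqrt ((c1 - c2)^2 + 8 * v11 * v21 * (1 + cos \<theta>)))
            + sqrt (c1 + c2 + sqrt ((c1 - c2)^2 + 8 * v11 * v21 * (1 + cos (2 * \<theta>))))"
    using core_inequality[OF a_pos _ k_nonneg discriminant_margin[OF assms(1-4,6,7)]] by simp
  then have "omega_plus c1 c2 v11 v21 (3 * \<theta>)
               < omega_minus c1 c2 v11 v21 \<theta> + omega_plus c1 c2 v11 v21 (2 * \<theta>)"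
    unfolding omega_pm_eq by (simp flip: distrib_left)
  then show ?thesis by simp
qed

end
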